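(* Let $V:(0,\infty)\to\mathbb R$ be continuous and satisfy $(V_1)$–$(V_3)$ (see context). Then: (i) $V^+(t)\to\infty$ as $t\to\infty$ and $V^+(t)\to0$ as $t\to0^+$; (ii) $V^-(t)\to0$ as $t\to\infty$; (iii) $V(t)\to\infty$ as $t\to\infty$; (iv) there exists $u_0\in X\setminus\{0\}$ with $P(u_0)<0$.
   Context: $V^+=\max\{V,0\}$, $V^-=\max\{-V,0\}$. $(V_1)$ there are $a_1,a_2:(0,\infty)\to\mathbb R$ with $a_2\in L^\infty$, $\inf_{t\ge2}a_1(t)>0$, $\inf_{t>0}a_2(t)>0$ and $a_1(t)\ln(1+t)\le V^+(t)\le a_2(t)\ln(1+t)$ for all $t>0$; $(V_2)$ there is $a_3:(0,\infty)\to\mathbb R$, positive on a set of positive measure, with $V^-(t)\le a_3(t)/t$ for all $t>0$, and either $a_3\in L^\infty$ or $a_3(t)=t^{-\lambda}$ for all $t>0$ for some $\lambda\in[1,3)$; $(V_3)$ there is an open set $\mathcal I\subset(0,\infty)$ with $V(t)<0$ for all $t\in\mathcal I$. $X=\{u\in H^1(\mathbb R^2):\int_{\mathbb R^2}\ln(1+|x|)u^2\,dx<\infty\}$ and $P(u)=\int_{\mathbb R^2}\int_{\mathbb R^2}V(|x-y|)u^2(x)u^2(y)\,dx\,dy$. *)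

theory Defs
  imports "HOL-Analysis.Analysis"
begin

definition Vplus :: "(real \<Rightarrow> real) \<Rightarrow> real \<Rightarrow> real" where
  "Vplus V t = max (V t) 0"

definition Vminus :: "(real \<Rightarrow> real) \<Rightarrow> real \<Rightarrow> real" where
  "Vminus V t = max (- V t) 0"

definition Linf_pos :: "(real \<Rightarrow> real) \<Rightarrow> bool" where
  "Linf_pos a \<longleftrightarrow> set_borel_measurable lebesgue {0<..} a \<and>
     (\<exists>M. AE t in lebesgue. t \<in> {0<..} \<longrightarrow> \<bar>a t\<bar> \<le> M)"

definition pderiv2 :: "2 \<Rightarrow> (real^2 \<Rightarrow> real) \<Rightarrow> real^2 \<Rightarrow> real" where
  "pderiv2 i f x = frechet_derivative f (at x) (axis i 1)"

fun iter_pderiv2 :: "2 list \<Rightarrow> (real^2 \<Rightarrow> real) \<Rightarrow> real^2 \<Rightarrow> real" where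
  "iter_pderiv2 [] f = f"
| "iter_pderiv2 (i # is) f = pderiv2 i (iter_pderiv2 is f)"

definition smooth2 :: "(real^2 \<Rightarrow> real) \<Rightarrow> bool" where
  "smooth2 f \<longleftrightarrow> (\<forall>is x. iter_pderiv2 is f differentiable (at x))"

definition test_fun2 :: "(real^2 \<Rightarrow> real) \<Rightarrow> bool" where
  "test_fun2 \<phi> \<longleftrightarrow> smooth2 \<phi> \<and> bounded {x. \<phi> x \<noteq> 0}"

definition weak_pderiv2 :: "2 \<Rightarrow> (real^2 \<Rightarrow> real) \<Rightarrow> (real^2 \<Rightarrow> real) \<Rightarrow> bool" where
  "weak_pderiv2 i u g \<longleftrightarrow> (\<forall>\<phi>. test_fun2 \<phi> \<longrightarrow>
     (\<integral>x. u x * pderiv2 i \<phi> x \<partial>lebesgue) = - (\<integral>x. g x * \<phi> x \<partial>lebesgue))"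

definition L2 :: "(real^2 \<Rightarrow> real) \<Rightarrow> bool" where
  "L2 u \<longleftrightarrow> u \<in> borel_measurable lebesgue \<and> integrable lebesgue (\<lambda>x. (u x)^2)"

text \<open>Sobolev space H^1(R^2) (functions as representatives).\<close>
definition H1 :: "(real^2 \<Rightarrow> real) set" where
  "H1 = {u. L2 u \<and> (\<forall>i. \<exists>g. L2 g \<and> weak_pderiv2 i u g)}"

definition Xsp :: "(real^2 \<Rightarrow> real) set" where
  "Xsp = {u \<in> H1. integrable lebesgue (\<lambda>x. ln (1 + norm x) * (u x)^2)}"

definition Pfun :: "(real \<Rightarrow> real) \<Rightarrow> (real^2 \<Rightarrow> real) \<Rightarrow> ereal" where
  "Pfun V u =
     enn2ereal (\<integral>\<^sup>+x. \<integral>\<^sup>+y. ennreal (Vplus V (norm (x - y)) * (u x)^2 * (u y)^2) \<partial>lebesgue \<partial>lebesgue)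
   - enn2ereal (\<integral>\<^sup>+x. \<integral>\<^sup>+y. ennreal (Vminus V (norm (x - y)) * (u x)^2 * (u y)^2) \<partial>lebesgue \<partial>lebesgue)"

end

theory Submission
  imports Defs "HOL-Real_Asymp.Real_Asymp"
begin

(*
  (i) For t \<ge> 2 the positive part V^+ lies above c ln(1 + t), and everywhere below
  M ln(1 + t), where M is an essential bound of a_2; the almost-everywhere bound becomes a
  pointwise one because V^+ is continuous. (ii), (iii) Once V^+ tends to infinity, V is
  eventually positive, so V^- eventually vanishes and V = V^+.

  (iv) Choose an interval [r - d, r + d] on which V \<le> -\<delta> and let u be the sum of two
  C^1 bumps of radius \<epsilon> \<le> d/2 whose centres are at distance r. Two points of the same
  bump are closer than 2\<epsilon>, where V^+ \<le> \<delta>/4 because V^+ tends to 0 at 0; two points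
  of different bumps are at a distance in (r - 2\<epsilon>, r + 2\<epsilon>), where V \<le> -\<delta>. If m is the
  integral of the square of one bump, the repulsive part of P(u) is at most
  (\<delta>/4)(2m)^2 = \<delta>m^2 and the attractive part at least 2\<delta>m^2, hence P(u) < 0.
  Compactly supported C^1 functions lie in X because their classical partial derivatives
  are weak derivatives: the integral of a directional derivative of such a function
  vanishes, being the limit of integrals of difference quotients, which vanish by
  translation invariance.
*)

lemma integrable_lborel_vanishing_outside_ball:
  fixes f :: "'a::euclidean_space \<Rightarrow> 'b::{banach, second_countable_topology}"
  assumes "continuous_on UNIV f" "\<And>x. R < norm x \<Longrightarrow> f x = 0"
  shows "integrable lborel f"
proof -
  have "integrable lborel (\<lambda>x. indicator (cball 0 R) x *\<^sub>R f x)"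
    by (rule borel_integrable_compact) (auto intro: continuous_on_subset[OF assms(1)])
  moreover have "(\<lambda>x. indicator (cball 0 R) x *\<^sub>R f x) = f"
    using assms(2) by (auto simp: indicator_def fun_eq_iff)
  ultimately show ?thesis by simp
qed

lemma integrable_lebesgue_vanishing_outside_ball:
  fixes f :: "'a::euclidean_space \<Rightarrow> 'b::{banach, second_countable_topology}"
  assumes "continuous_on UNIV f" "\<And>x. R < norm x \<Longrightarrow> f x = 0"
  shows "integrable lebesgue f"
  using integrable_lborel_vanishing_outside_ball[OF assms] assms(1)
  by (subst integrable_completion) (auto intro: borel_measurable_continuous_onI)

lemma integral_lborel_translate:
  fixes f :: "'a::euclidean_space \<Rightarrow> 'b::{banach, second_countable_topology}"
  assumes "f \<in> borel_measurable borel"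
  shows "(\<integral>x. f (c + x) \<partial>lborel) = integral\<^sup>L lborel f"
  using assms by (subst (2) lborel_distr_plus[of c, symmetric]) (simp add: integral_distr)

lemma nn_integral_lborel_translate:
  fixes f :: "'a::euclidean_space \<Rightarrow> ennreal"
  assumes "f \<in> borel_measurable borel"
  shows "(\<integral>\<^sup>+x. f (c + x) \<partial>lborel) = integral\<^sup>N lborel f"
  using assms by (subst (2) lborel_distr_plus[of c, symmetric]) (simp add: nn_integral_distr)

lemma not_AE_eq_0_if_continuous:
  fixes f :: "'a::euclidean_space \<Rightarrow> real"
  assumes "continuous_on UNIV f" "f x \<noteq> 0"
  shows "\<not> (AE y in lebesgue. f y = 0)"
proof
  assume "AE y in lebesgue. f y = 0"
  then have "x \<in> {y. f y = 0}"
    by (intro mem_closed_if_AE_lebesgue closed_Collect_eq assms(1) continuous_on_const) simp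
  with assms(2) show False by simp
qed

lemma AE_le_imp_le_continuous_on:
  fixes f g :: "'a::euclidean_space \<Rightarrow> real"
  assumes "open S" "continuous_on S f" "continuous_on S g"
    and "AE x\<in>S in lebesgue. f x \<le> g x" "x \<in> S"
  shows "f x \<le> g x"
proof -
  obtain A where A: "open A" "A \<inter> S = {y\<in>S. g y < f y}"
    using open_Collect_less_Int[OF assms(3,2)] by blast
  have "AE y\<in>A \<inter> S in lebesgue. y \<in> {}"
    using assms(4) by eventually_elim (use A(2) in auto)
  then have "x \<notin> A \<inter> S"
    using mem_closed_if_AE_lebesgue_open[of "A \<inter> S" "{}"] A(1) assms(1) by blast
  then show ?thesis using A(2) assms(5) by auto
qed

lemma has_real_derivative_along_line:
  fixes f :: "'a::real_normed_vector \<Rightarrow> real"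
  assumes "(f has_derivative f') (at (x + t *\<^sub>R e))"
  shows "((\<lambda>s. f (x + s *\<^sub>R e)) has_real_derivative f' e) (at t)"
proof -
  have "((\<lambda>s. x + s *\<^sub>R e) has_derivative (\<lambda>s. s *\<^sub>R e)) (at t)"
    by (auto intro!: derivative_eq_intros)
  from has_derivative_compose[OF this assms]
  have "((\<lambda>s. f (x + s *\<^sub>R e)) has_derivative (\<lambda>s. f' (s *\<^sub>R e))) (at t)"
    by (simp add: o_def)
  moreover have "f' (s *\<^sub>R e) = f' e * s" for s
    using linear_scale[OF has_derivative_linear[OF assms]] by simp
  ultimately show ?thesis by (simp add: has_field_derivative_def)
qed

lemma integral_lborel_shift_diff_eq_0:
  fixes w :: "'a::euclidean_space \<Rightarrow> real"
  assumes cw: "continuous_on UNIV w" and supp: "\<And>x. R < norm x \<Longrightarrow> w x = 0"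
  shows "(\<integral>x. w (x + v) - w x \<partial>lborel) = 0"
proof -
  have "w (x + v) = 0" if "R + norm v < norm x" for x
    using supp[of "x + v"] norm_triangle_ineq2[of x "- v"] that by simp
  then have "integrable lborel (\<lambda>x. w (x + v))"
    by (intro integrable_lborel_vanishing_outside_ball[where R="R + norm v"])
       (intro continuous_intros continuous_on_compose2[OF cw], auto)
  moreover have "(\<integral>x. w (x + v) \<partial>lborel) = integral\<^sup>L lborel w"
    using integral_lborel_translate[of w v] cw
    by (simp add: add.commute borel_measurable_continuous_onI)
  ultimately show ?thesis
    using integrable_lborel_vanishing_outside_ball[OF cw supp] by simp
qed

lemma difference_quotient_uniform_approx:
  fixes w D :: "'a::euclidean_space \<Rightarrow> real"
  assumes cD: "continuous_on UNIV D" and e: "norm e = 1" and \<epsilon>: "\<epsilon> > 0"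
    and der: "\<And>x t. ((\<lambda>s. w (x + s *\<^sub>R e)) has_real_derivative D (x + t *\<^sub>R e)) (at t)"
  obtains h where "0 < h" "h \<le> 1"
    "\<And>x. norm x \<le> K \<Longrightarrow> \<bar>D x - (w (x + h *\<^sub>R e) - w x) / h\<bar> < \<epsilon>"
proof -
  have "uniformly_continuous_on (cball 0 (K + 1)) D"
    by (intro compact_uniformly_continuous continuous_on_subset[OF cD]) auto
  then obtain d where d: "d > 0" and
    dD: "\<And>x y. x \<in> cball 0 (K + 1) \<Longrightarrow> y \<in> cball 0 (K + 1) \<Longrightarrow> dist y x < d \<Longrightarrow> dist (D y) (D x) < \<epsilon>"
    using \<epsilon> unfolding uniformly_continuous_on_def by metis
  define h where "h = min 1 (d / 2)"
  have h: "0 < h" "h \<le> 1" "h < d" using d by (auto simp: h_def)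
  have "\<bar>D x - (w (x + h *\<^sub>R e) - w x) / h\<bar> < \<epsilon>" if x: "norm x \<le> K" for x
  proof -
    obtain z where z: "0 < z" "z < h" "w (x + h *\<^sub>R e) - w (x + 0 *\<^sub>R e) = (h - 0) * D (x + z *\<^sub>R e)"
      using MVT2[OF h(1), of "\<lambda>s. w (x + s *\<^sub>R e)" "\<lambda>s. D (x + s *\<^sub>R e)"] der by blast
    have "x \<in> cball 0 (K + 1)" "x + z *\<^sub>R e \<in> cball 0 (K + 1)"
      unfolding mem_cball_0 using norm_triangle_ineq[of x "z *\<^sub>R e"] e z h x by simp_all
    moreover have "dist (x + z *\<^sub>R e) x < d"
      using z h e by (simp add: dist_norm)
    ultimately have "dist (D (x + z *\<^sub>R e)) (D x) < \<epsilon>"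
      by (rule dD)
    then show ?thesis using z h by (simp add: dist_real_def abs_minus_commute)
  qed
  with h show ?thesis by (intro that) auto
qed

lemma integral_directional_derivative_eq_0:
  fixes w D :: "'a::euclidean_space \<Rightarrow> real"
  assumes cw: "continuous_on UNIV w" and cD: "continuous_on UNIV D" and e: "norm e = 1"
    and supp: "\<And>x. R < norm x \<Longrightarrow> w x = 0 \<and> D x = 0"
    and der: "\<And>x t. ((\<lambda>s. w (x + s *\<^sub>R e)) has_real_derivative D (x + t *\<^sub>R e)) (at t)"
  shows "integral\<^sup>L lborel D = 0"
proof -
  define K where "K = cball (0::'a) (R + 1)"
  define C where "C = measure lborel K"
  have intK: "integrable lborel (indicator K :: 'a \<Rightarrow> real)"
    unfolding K_def by (intro integrable_real_indicator emeasure_compact_finite) auto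
  have intD: "integrable lborel D"
    using integrable_lborel_vanishing_outside_ball[OF cD] supp by blast
  have bound: "\<bar>integral\<^sup>L lborel D\<bar> \<le> \<epsilon> * C" if \<epsilon>: "\<epsilon> > 0" for \<epsilon>
  proof -
    obtain h where h: "0 < h" "h \<le> 1"
      and approx: "\<And>x. norm x \<le> R + 1 \<Longrightarrow> \<bar>D x - (w (x + h *\<^sub>R e) - w x) / h\<bar> < \<epsilon>"
      using difference_quotient_uniform_approx[OF cD e \<epsilon> der] by blast
    define Q where "Q x = (w (x + h *\<^sub>R e) - w x) / h" for x
    have Q0: "Q x = 0" if "R + 1 < norm x" for x
      using supp[of x] supp[of "x + h *\<^sub>R e"] norm_triangle_ineq2[of x "- (h *\<^sub>R e)"] that h e
      by (simp add: Q_def)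
    have intQ: "integrable lborel Q"
      by (rule integrable_lborel_vanishing_outside_ball[OF _ Q0], unfold Q_def)
         (intro continuous_intros continuous_on_compose2[OF cw], use h in auto)
    have "(\<integral>x. w (x + h *\<^sub>R e) - w x \<partial>lborel) = 0"
      by (rule integral_lborel_shift_diff_eq_0[OF cw]) (use supp in blast)
    then have "integral\<^sup>L lborel Q = 0"
      by (simp add: Q_def[abs_def])
    then have "\<bar>integral\<^sup>L lborel D\<bar> = \<bar>\<integral>x. D x - Q x \<partial>lborel\<bar>"
      using intD intQ by simp
    also have "\<dots> \<le> (\<integral>x. \<bar>D x - Q x\<bar> \<partial>lborel)"
      using integral_norm_bound[of lborel "\<lambda>x. D x - Q x"] by simp
    also have "\<dots> \<le> (\<integral>x. \<epsilon> * indicator K x \<partial>lborel)"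
    proof (rule integral_mono)
      show "\<bar>D x - Q x\<bar> \<le> \<epsilon> * indicator K x" for x
        using approx[of x] Q0[of x] supp[of x] \<epsilon> by (auto simp: Q_def K_def indicator_def)
    qed (use intD intQ intK in auto)
    also have "\<dots> = \<epsilon> * C" by (simp add: C_def)
    finally show ?thesis .
  qed
  have "\<bar>integral\<^sup>L lborel D\<bar> \<le> 0 + \<epsilon>" if "\<epsilon> > 0" for \<epsilon>
  proof -
    have "C \<ge> 0" by (simp add: C_def)
    then have "\<epsilon> / (C + 1) * C \<le> \<epsilon>"
      using that by (simp add: field_simps)
    then show ?thesis using bound[of "\<epsilon> / (C + 1)"] that \<open>C \<ge> 0\<close> by simp
  qed
  then show ?thesis using field_le_epsilon[of "\<bar>integral\<^sup>L lborel D\<bar>" 0] by simp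
qed

lemma test_fun2_C1:
  assumes "test_fun2 \<phi>"
  shows "\<phi> differentiable (at x)" "continuous_on UNIV \<phi>" "continuous_on UNIV (pderiv2 i \<phi>)"
proof -
  have "iter_pderiv2 is \<phi> differentiable (at x)" for "is" x
    using assms by (auto simp: test_fun2_def smooth2_def)
  from this[of "[]"] this[of "[i]"]
  have "\<phi> differentiable (at x)" "pderiv2 i \<phi> differentiable (at x)" for x
    by simp_all
  then show "\<phi> differentiable (at x)" "continuous_on UNIV \<phi>" "continuous_on UNIV (pderiv2 i \<phi>)"
    by (auto intro!: continuous_at_imp_continuous_on differentiable_imp_continuous_within)
qed

lemma weak_pderiv2_of_C1:
  fixes u :: "real^2 \<Rightarrow> real" and du :: "real^2 \<Rightarrow> real^2 \<Rightarrow> real"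
  assumes ud: "\<And>x. (u has_derivative du x) (at x)"
    and cdu: "continuous_on UNIV (\<lambda>x. du x (axis i 1))"
    and supp: "\<And>x. R < norm x \<Longrightarrow> u x = 0 \<and> du x (axis i 1) = 0"
  shows "weak_pderiv2 i u (\<lambda>x. du x (axis i 1))"
  unfolding weak_pderiv2_def
proof (intro allI impI)
  fix \<phi> assume "test_fun2 \<phi>"
  note \<phi> = test_fun2_C1(1,2)[OF this] test_fun2_C1(3)[OF this, of i]
  have cu: "continuous_on UNIV u"
    using ud by (intro continuous_at_imp_continuous_on) (auto intro: has_derivative_continuous)
  define e :: "real^2" where "e = axis i 1"
  define D where "D y = du y e * \<phi> y + u y * pderiv2 i \<phi> y" for y
  have "((\<lambda>y. u y * \<phi> y) has_derivative
      (\<lambda>v. u y * frechet_derivative \<phi> (at y) v + du y v * \<phi> y)) (at y)" for y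
    using has_derivative_mult[OF ud frechet_derivative_works[THEN iffD1, OF \<phi>(1)]] by simp
  from has_real_derivative_along_line[OF this]
  have "((\<lambda>s. u (x + s *\<^sub>R e) * \<phi> (x + s *\<^sub>R e)) has_real_derivative D (x + t *\<^sub>R e)) (at t)" for x t
    by (simp add: D_def pderiv2_def e_def algebra_simps)
  then have "integral\<^sup>L lborel D = 0"
    by (intro integral_directional_derivative_eq_0[where w="\<lambda>y. u y * \<phi> y" and R=R])
       (use supp in \<open>auto simp: e_def D_def intro!: continuous_intros cdu cu \<phi>\<close>)
  moreover have "integrable lborel (\<lambda>y. du y e * \<phi> y)" "integrable lborel (\<lambda>y. u y * pderiv2 i \<phi> y)"
    using supp
    by (auto simp: e_def intro!: integrable_lborel_vanishing_outside_ball[where R=R] continuous_intros cdu cu \<phi>)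
  moreover have "integral\<^sup>L lebesgue f = integral\<^sup>L lborel f" if "continuous_on UNIV f" for f :: "real^2 \<Rightarrow> real"
    using that by (simp add: integral_completion borel_measurable_continuous_onI)
  ultimately show "(\<integral>x. u x * pderiv2 i \<phi> x \<partial>lebesgue) = - (\<integral>x. du x (axis i 1) * \<phi> x \<partial>lebesgue)"
    by (simp add: D_def[abs_def] e_def continuous_intros cdu cu \<phi>)
qed

lemma C1_vanishing_outside_ball_in_Xsp:
  fixes u :: "real^2 \<Rightarrow> real" and du :: "real^2 \<Rightarrow> real^2 \<Rightarrow> real"
  assumes ud: "\<And>x. (u has_derivative du x) (at x)"
    and cdu: "\<And>v. continuous_on UNIV (\<lambda>x. du x v)"
    and supp: "\<And>x v. R < norm x \<Longrightarrow> u x = 0 \<and> du x v = 0"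
  shows "u \<in> Xsp"
proof -
  have cu: "continuous_on UNIV u"
    using ud by (intro continuous_at_imp_continuous_on) (auto intro: has_derivative_continuous)
  have L2: "L2 f" if "continuous_on UNIV f" "\<And>x. R < norm x \<Longrightarrow> f x = 0" for f
    unfolding L2_def using that
    by (auto intro!: integrable_lebesgue_vanishing_outside_ball[where R=R] continuous_intros
        measurable_completion borel_measurable_continuous_onI)
  have "L2 (\<lambda>x. du x (axis i 1)) \<and> weak_pderiv2 i u (\<lambda>x. du x (axis i 1))" for i
    using supp by (intro conjI L2 cdu weak_pderiv2_of_C1[OF ud cdu, where R=R]) auto
  moreover have "L2 u" using supp by (intro L2 cu) auto
  moreover have "integrable lebesgue (\<lambda>x. ln (1 + norm x) * (u x)^2)"
    using supp
    by (intro integrable_lebesgue_vanishing_outside_ball[where R=R])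
       (auto intro!: continuous_intros cu simp: add_nonneg_eq_0_iff)
  ultimately show ?thesis by (auto simp: Xsp_def H1_def)
qed

lemma has_real_derivative_max_0_square:
  "((\<lambda>s. (max 0 s)\<^sup>2) has_real_derivative 2 * max 0 s) (at s)" for s :: real
proof -
  consider "s > 0" | "s < 0" | "s = 0" by linarith
  then show ?thesis
  proof cases
    case 1
    have ev: "eventually (\<lambda>t. (max 0 t)\<^sup>2 = t\<^sup>2) (nhds s)"
      using eventually_nhds_in_open[of "{0<..}" s] 1 by (auto elim!: eventually_mono)
    show ?thesis
      using 1 by (subst DERIV_cong_ev[OF refl ev refl]) (auto intro!: derivative_eq_intros)
  next
    case 2
    have ev: "eventually (\<lambda>t. (max 0 t)\<^sup>2 = 0) (nhds s)"
      using eventually_nhds_in_open[of "{..<0}" s] 2 by (auto elim!: eventually_mono)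
    show ?thesis
      using 2 by (subst DERIV_cong_ev[OF refl ev refl]) simp
  next
    case 3
    have "((\<lambda>h. max 0 h) \<longlongrightarrow> max 0 0) (at (0::real))"
      by (intro tendsto_max tendsto_const tendsto_ident_at)
    moreover have "((max 0 (0 + h))\<^sup>2 - (max 0 0)\<^sup>2) / h = max 0 h" for h :: real
      by (auto simp: max_def power2_eq_square)
    ultimately show ?thesis
      using 3 by (simp add: DERIV_def)
  qed
qed

definition bump :: "'a::real_inner \<Rightarrow> real \<Rightarrow> 'a \<Rightarrow> real" where
  "bump c \<epsilon> x = (max 0 (\<epsilon>\<^sup>2 - (x - c) \<bullet> (x - c)))\<^sup>2"

definition bump_deriv :: "'a::real_inner \<Rightarrow> real \<Rightarrow> 'a \<Rightarrow> 'a \<Rightarrow> real" where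
  "bump_deriv c \<epsilon> x v = -4 * max 0 (\<epsilon>\<^sup>2 - (x - c) \<bullet> (x - c)) * ((x - c) \<bullet> v)"

lemma has_derivative_bump: "(bump c \<epsilon> has_derivative bump_deriv c \<epsilon> x) (at x)"
proof -
  have "((\<lambda>x. \<epsilon>\<^sup>2 - (x - c) \<bullet> (x - c)) has_derivative (\<lambda>v. - (2 * ((x - c) \<bullet> v)))) (at x)"
    by (auto intro!: derivative_eq_intros simp: inner_commute)
  from has_derivative_compose[OF this
      has_real_derivative_max_0_square[unfolded has_field_derivative_def]]
  show ?thesis
    by (simp add: bump_def[abs_def] bump_deriv_def[abs_def] o_def algebra_simps)
qed

lemma continuous_on_bump: "continuous_on S (bump c \<epsilon>)"
  unfolding bump_def by (intro continuous_intros)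

lemma continuous_on_bump_deriv: "continuous_on S (\<lambda>x. bump_deriv c \<epsilon> x v)"
  unfolding bump_deriv_def by (intro continuous_intros)

lemma bump_nonneg: "bump c \<epsilon> x \<ge> 0"
  unfolding bump_def by simp

lemma bump_eq_0:
  assumes "0 \<le> \<epsilon>" "\<epsilon> \<le> norm (x - c)"
  shows "bump c \<epsilon> x = 0" "bump_deriv c \<epsilon> x v = 0"
proof -
  have "\<epsilon>\<^sup>2 \<le> (x - c) \<bullet> (x - c)"
    using power_mono[OF assms(2,1), of 2] by (simp add: power2_norm_eq_inner)
  then show "bump c \<epsilon> x = 0" "bump_deriv c \<epsilon> x v = 0"
    by (simp_all add: bump_def bump_deriv_def)
qed

lemma bump_pos:
  assumes "norm (x - c) < \<epsilon>"
  shows "bump c \<epsilon> x > 0"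
proof -
  have "(x - c) \<bullet> (x - c) < \<epsilon>\<^sup>2"
    using power_strict_mono[OF assms norm_ge_zero, of 2] by (simp add: power2_norm_eq_inner)
  then show ?thesis by (simp add: bump_def)
qed

lemma bump_neq_0_imp_near:
  assumes "bump c \<epsilon> x \<noteq> 0" "0 \<le> \<epsilon>"
  shows "norm (x - c) < \<epsilon>"
  using bump_eq_0(1)[of \<epsilon> x c] assms by force

lemma bumps_distance:
  assumes "bump c \<epsilon> x \<noteq> 0" "bump c' \<epsilon> y \<noteq> 0" "0 \<le> \<epsilon>"
  shows "\<bar>norm (x - y) - norm (c - c')\<bar> < 2 * \<epsilon>"
proof -
  have "\<bar>norm (x - y) - norm (c - c')\<bar> \<le> norm ((x - c) - (y - c'))"
    using norm_triangle_ineq3[of "x - y" "c - c'"] by (simp add: algebra_simps)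
  also have "\<dots> \<le> norm (x - c) + norm (y - c')"
    by (rule norm_triangle_ineq4)
  also have "\<dots> < 2 * \<epsilon>"
    using bump_neq_0_imp_near[OF assms(1,3)] bump_neq_0_imp_near[OF assms(2,3)] by simp
  finally show ?thesis .
qed

lemma nn_integral_bump_square:
  assumes "\<epsilon> > 0"
  obtains m where "m > 0" "\<And>c::'a::euclidean_space. (\<integral>\<^sup>+x. ennreal ((bump c \<epsilon> x)\<^sup>2) \<partial>lebesgue) = ennreal m"
proof -
  have cont: "continuous_on UNIV (\<lambda>x. (bump c \<epsilon> x)\<^sup>2)" for c :: 'a
    by (intro continuous_intros continuous_on_bump)
  have int: "integrable lebesgue (\<lambda>x::'a. (bump 0 \<epsilon> x)\<^sup>2)"
  proof (rule integrable_lebesgue_vanishing_outside_ball[OF cont])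
    show "(bump 0 \<epsilon> x)\<^sup>2 = 0" if "\<epsilon> < norm x" for x
      using bump_eq_0(1)[of \<epsilon> x 0] assms that by simp
  qed
  define m where "m = (\<integral>x. (bump (0::'a) \<epsilon> x)\<^sup>2 \<partial>lebesgue)"
  have "\<not> (AE x in lebesgue. (bump (0::'a) \<epsilon> x)\<^sup>2 = 0)"
    using bump_pos[of "0::'a" 0 \<epsilon>] assms by (intro not_AE_eq_0_if_continuous[OF cont, where x=0]) simp
  then have "m \<noteq> 0"
    by (simp add: m_def integral_nonneg_eq_0_iff_AE[OF int])
  then have "m > 0"
    unfolding m_def by (simp add: order_less_le)
  moreover have "(\<integral>\<^sup>+x. ennreal ((bump c \<epsilon> x)\<^sup>2) \<partial>lebesgue) = ennreal m" for c :: 'a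
  proof -
    have [measurable]: "(\<lambda>x. (bump c \<epsilon> x)\<^sup>2) \<in> borel_measurable borel"
      by (rule borel_measurable_continuous_onI[OF cont])
    have "(\<integral>\<^sup>+x. ennreal ((bump c \<epsilon> x)\<^sup>2) \<partial>lebesgue) = (\<integral>\<^sup>+x. ennreal ((bump c \<epsilon> (c + x))\<^sup>2) \<partial>lborel)"
      by (simp add: nn_integral_completion nn_integral_lborel_translate[where f="\<lambda>x. ennreal ((bump c \<epsilon> x)\<^sup>2)"])
    also have "\<dots> = (\<integral>\<^sup>+x. ennreal ((bump (0::'a) \<epsilon> x)\<^sup>2) \<partial>lebesgue)"
      by (simp add: nn_integral_completion bump_def)
    also have "\<dots> = ennreal m"
      unfolding m_def using int by (rule nn_integral_eq_integral) simp
    finally show ?thesis .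
  qed
  ultimately show ?thesis by (rule that)
qed

lemma bump_pair_in_Xsp:
  fixes c c' :: "real^2"
  assumes "\<epsilon> \<ge> 0"
  shows "(\<lambda>x. bump c \<epsilon> x + bump c' \<epsilon> x) \<in> Xsp"
proof (rule C1_vanishing_outside_ball_in_Xsp)
  show "((\<lambda>x. bump c \<epsilon> x + bump c' \<epsilon> x) has_derivative
      (\<lambda>v. bump_deriv c \<epsilon> x v + bump_deriv c' \<epsilon> x v)) (at x)" for x
    by (intro has_derivative_add has_derivative_bump)
  show "continuous_on UNIV (\<lambda>x. bump_deriv c \<epsilon> x v + bump_deriv c' \<epsilon> x v)" for v
    by (intro continuous_intros continuous_on_bump_deriv)
  show "bump c \<epsilon> x + bump c' \<epsilon> x = 0 \<and> bump_deriv c \<epsilon> x v + bump_deriv c' \<epsilon> x v = 0"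
    if "norm c + norm c' + \<epsilon> < norm x" for x v
  proof -
    have "\<epsilon> \<le> norm (x - c)" "\<epsilon> \<le> norm (x - c')"
      using that norm_triangle_ineq2[of x c] norm_triangle_ineq2[of x c'] norm_ge_zero[of c]
        norm_ge_zero[of c'] by linarith+
    then show ?thesis by (simp add: bump_eq_0[OF assms])
  qed
qed

lemma Vplus_le_ess_bound:
  assumes cont: "continuous_on {0<..} V" and a: "Linf_pos a"
    and le: "\<forall>t>0. Vplus V t \<le> a t * ln (1 + t)"
  obtains M where "\<forall>t>0. Vplus V t \<le> M * ln (1 + t)"
proof -
  obtain M where M: "AE t in lebesgue. t \<in> {0<..} \<longrightarrow> \<bar>a t\<bar> \<le> M"
    using a by (auto simp: Linf_pos_def)
  have "AE t\<in>{0<..} in lebesgue. Vplus V t \<le> M * ln (1 + t)"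
    using M
  proof eventually_elim
    case (elim t)
    show ?case
    proof
      assume "t \<in> {0<..}"
      then have "Vplus V t \<le> a t * ln (1 + t)" "a t \<le> M" "ln (1 + t) \<ge> 0"
        using le elim by auto
      then show "Vplus V t \<le> M * ln (1 + t)"
        using mult_right_mono[of "a t" M "ln (1 + t)"] by linarith
    qed
  qed
  moreover have "continuous_on {0<..} (Vplus V)"
    unfolding Vplus_def[abs_def] by (intro continuous_intros cont)
  moreover have "continuous_on {0<..} (\<lambda>t. M * ln (1 + t))"
    by (intro continuous_intros) auto
  ultimately have "Vplus V t \<le> M * ln (1 + t)" if "t > 0" for t
    using AE_le_imp_le_continuous_on[of "{0<..}" "Vplus V"] that by auto
  then show ?thesis using that by blast
qed

lemma Vplus_tendsto_at_top:
  assumes "\<exists>c>0. \<forall>t\<ge>2. a t \<ge> c" "\<forall>t>0. a t * ln (1 + t) \<le> Vplus V t"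
  shows "filterlim (Vplus V) at_top at_top"
proof -
  obtain c where c: "c > 0" "\<forall>t\<ge>2. a t \<ge> c" using assms(1) by auto
  have "filterlim (\<lambda>t::real. c * ln (1 + t)) at_top at_top"
    using c(1) by real_asymp
  moreover have "eventually (\<lambda>t. c * ln (1 + t) \<le> Vplus V t) at_top"
    using eventually_ge_at_top[of "2::real"]
  proof eventually_elim
    case (elim t)
    then have "c * ln (1 + t) \<le> a t * ln (1 + t)" using c by (intro mult_right_mono) auto
    also have "\<dots> \<le> Vplus V t" using assms(2) elim by auto
    finally show ?case .
  qed
  ultimately show ?thesis by (rule filterlim_at_top_mono)
qed

lemma Vplus_tendsto_0_at_right:
  assumes "\<forall>t>0. Vplus V t \<le> M * ln (1 + t)"
  shows "(Vplus V \<longlongrightarrow> 0) (at_right 0)"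
proof (rule tendsto_sandwich[where f="\<lambda>_. 0" and h="\<lambda>t. M * ln (1 + t)"])
  show "eventually (\<lambda>t. 0 \<le> Vplus V t) (at_right 0)" by (simp add: Vplus_def)
  show "eventually (\<lambda>t. Vplus V t \<le> M * ln (1 + t)) (at_right 0)"
    using assms by (auto simp: eventually_at_right_field intro!: exI[of _ 1])
  show "((\<lambda>t. M * ln (1 + t)) \<longlongrightarrow> 0) (at_right (0::real))" by real_asymp
qed simp

lemma eventually_V_pos_at_top:
  assumes "filterlim (Vplus V) at_top at_top"
  shows "eventually (\<lambda>t. V t > 0) at_top"
  using assms[unfolded filterlim_at_top, rule_format, of 1]
  by eventually_elim (auto simp: Vplus_def)

lemma Vminus_tendsto_0_at_top:
  assumes "filterlim (Vplus V) at_top at_top"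
  shows "(Vminus V \<longlongrightarrow> 0) at_top"
  using eventually_V_pos_at_top[OF assms]
  by (intro tendsto_eventually) (auto simp: Vminus_def elim!: eventually_mono)

lemma filterlim_V_at_top:
  assumes "filterlim (Vplus V) at_top at_top"
  shows "filterlim V at_top at_top"
  using assms
  by (rule filterlim_at_top_mono) (use eventually_V_pos_at_top[OF assms] in \<open>auto simp: Vplus_def elim!: eventually_mono\<close>)

lemma V_le_neg_on_interval:
  fixes V :: "real \<Rightarrow> real"
  assumes cont: "continuous_on {0<..} V"
    and I: "open I" "I \<noteq> {}" "I \<subseteq> {0<..}" "\<forall>t\<in>I. V t < 0"
  obtains r d \<delta> where "0 < d" "d < r" "0 < \<delta>" "\<forall>t\<in>{r-d..r+d}. V t \<le> - \<delta>"
proof -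
  obtain r where r: "r \<in> I" using I(2) by blast
  obtain e where e: "e > 0" "ball r e \<subseteq> I" using openE[OF I(1) r] by blast
  define d where "d = e / 2"
  have sub: "{r-d..r+d} \<subseteq> I"
    using e by (intro order.trans[OF _ e(2)]) (auto simp: d_def dist_real_def)
  have "r - d \<in> I" using sub e by (auto simp: d_def)
  then have "d < r" using I(3) by auto
  have "continuous_on {r-d..r+d} V"
    using cont sub I(3) by (blast intro: continuous_on_subset)
  then obtain s where s: "s \<in> {r-d..r+d}" "\<And>t. t \<in> {r-d..r+d} \<Longrightarrow> V t \<le> V s"
    using continuous_attains_sup[of "{r-d..r+d}" V] e by (fastforce simp: d_def)
  show ?thesis
  proof (rule that)
    show "0 < d" "d < r" using e \<open>d < r\<close> by (auto simp: d_def)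
    show "0 < - V s" using s(1) sub I(4) by auto
    show "\<forall>t\<in>{r-d..r+d}. V t \<le> - (- V s)" using s(2) by simp
  qed
qed

lemma nn_integral_Vplus_le:
  fixes u :: "'a::euclidean_space \<Rightarrow> real"
  assumes [measurable]: "u \<in> borel_measurable lebesgue" and "0 \<le> \<eta>"
    and near: "\<And>x y. x \<noteq> y \<Longrightarrow> u x \<noteq> 0 \<Longrightarrow> u y \<noteq> 0 \<Longrightarrow> Vplus V (norm (x - y)) \<le> \<eta>"
  shows "(\<integral>\<^sup>+x. \<integral>\<^sup>+y. ennreal (Vplus V (norm (x - y)) * (u x)\<^sup>2 * (u y)\<^sup>2) \<partial>lebesgue \<partial>lebesgue)
    \<le> ennreal \<eta> * (\<integral>\<^sup>+x. ennreal ((u x)\<^sup>2) \<partial>lebesgue)\<^sup>2"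
proof -
  have "(\<integral>\<^sup>+x. \<integral>\<^sup>+y. ennreal (Vplus V (norm (x - y)) * (u x)\<^sup>2 * (u y)\<^sup>2) \<partial>lebesgue \<partial>lebesgue)
    \<le> (\<integral>\<^sup>+x. \<integral>\<^sup>+y. ennreal \<eta> * ennreal ((u x)\<^sup>2) * ennreal ((u y)\<^sup>2) \<partial>lebesgue \<partial>lebesgue)"
  proof (rule nn_integral_mono, rule nn_integral_mono_AE)
    fix x :: 'a
    have "AE y in lebesgue. y \<noteq> x"
      by (rule AE_completion[OF AE_lborel_singleton])
    then show "AE y in lebesgue. ennreal (Vplus V (norm (x - y)) * (u x)\<^sup>2 * (u y)\<^sup>2)
        \<le> ennreal \<eta> * ennreal ((u x)\<^sup>2) * ennreal ((u y)\<^sup>2)"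
    proof eventually_elim
      case (elim y)
      have "Vplus V (norm (x - y)) * ((u x)\<^sup>2 * (u y)\<^sup>2) \<le> \<eta> * ((u x)\<^sup>2 * (u y)\<^sup>2)"
        using near[of x y] elim by (cases "u x = 0 \<or> u y = 0") (auto intro: mult_right_mono)
      then show ?case
        using \<open>0 \<le> \<eta>\<close> by (simp add: ennreal_mult'[symmetric] ennreal_leI mult.assoc)
    qed
  qed
  also have "\<dots> = ennreal \<eta> * (\<integral>\<^sup>+x. ennreal ((u x)\<^sup>2) \<partial>lebesgue)\<^sup>2"
    by (simp add: nn_integral_cmult nn_integral_multc power2_eq_square mult.assoc)
  finally show ?thesis .
qed

lemma Vminus_cross_terms_le:
  assumes disj: "u1 x = 0 \<or> u2 x = 0" "u1 y = 0 \<or> u2 y = 0"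
    and far: "\<And>x y. u1 x \<noteq> 0 \<Longrightarrow> u2 y \<noteq> 0 \<Longrightarrow> \<delta> \<le> Vminus V (norm (x - y))"
  shows "\<delta> * ((u1 x)\<^sup>2 * (u2 y)\<^sup>2 + (u2 x)\<^sup>2 * (u1 y)\<^sup>2)
    \<le> Vminus V (norm (x - y)) * (u1 x + u2 x)\<^sup>2 * (u1 y + u2 y)\<^sup>2"
proof -
  let ?W = "Vminus V (norm (x - y))"
  have W: "?W \<ge> 0" by (simp add: Vminus_def)
  have "\<delta> * ((u1 x)\<^sup>2 * (u2 y)\<^sup>2) \<le> ?W * ((u1 x)\<^sup>2 * (u2 y)\<^sup>2)"
    using far[of x y] by (cases "u1 x = 0 \<or> u2 y = 0") (auto intro: mult_right_mono)
  moreover have "\<delta> * ((u2 x)\<^sup>2 * (u1 y)\<^sup>2) \<le> ?W * ((u2 x)\<^sup>2 * (u1 y)\<^sup>2)"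
    using far[of y x] by (cases "u2 x = 0 \<or> u1 y = 0") (auto intro: mult_right_mono simp: norm_minus_commute)
  moreover have "?W * ((u1 x)\<^sup>2 * (u2 y)\<^sup>2 + (u2 x)\<^sup>2 * (u1 y)\<^sup>2)
      \<le> ?W * (u1 x + u2 x)\<^sup>2 * (u1 y + u2 y)\<^sup>2"
    using disj W by (auto simp: algebra_simps)
  ultimately show ?thesis by (simp add: algebra_simps)
qed

lemma nn_integral_Vminus_ge:
  fixes u1 u2 :: "'a::euclidean_space \<Rightarrow> real"
  assumes [measurable]: "u1 \<in> borel_measurable lebesgue" "u2 \<in> borel_measurable lebesgue"
    and disj: "\<And>x. u1 x = 0 \<or> u2 x = 0" and "0 \<le> \<delta>"
    and far: "\<And>x y. u1 x \<noteq> 0 \<Longrightarrow> u2 y \<noteq> 0 \<Longrightarrow> \<delta> \<le> Vminus V (norm (x - y))"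
  shows "ennreal (2 * \<delta>) * (\<integral>\<^sup>+x. ennreal ((u1 x)\<^sup>2) \<partial>lebesgue) * (\<integral>\<^sup>+x. ennreal ((u2 x)\<^sup>2) \<partial>lebesgue)
    \<le> (\<integral>\<^sup>+x. \<integral>\<^sup>+y. ennreal (Vminus V (norm (x - y)) * (u1 x + u2 x)\<^sup>2 * (u1 y + u2 y)\<^sup>2) \<partial>lebesgue \<partial>lebesgue)"
proof -
  define F1 where "F1 x = ennreal ((u1 x)\<^sup>2)" for x
  define F2 where "F2 x = ennreal ((u2 x)\<^sup>2)" for x
  have [measurable]: "F1 \<in> borel_measurable lebesgue" "F2 \<in> borel_measurable lebesgue"
    unfolding F1_def[abs_def] F2_def[abs_def] by measurable
  define I1 where "I1 = integral\<^sup>N lebesgue F1"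
  define I2 where "I2 = integral\<^sup>N lebesgue F2"
  have "(\<integral>\<^sup>+x. \<integral>\<^sup>+y. ennreal \<delta> * (F1 x * F2 y + F2 x * F1 y) \<partial>lebesgue \<partial>lebesgue)
      = (\<integral>\<^sup>+x. ennreal \<delta> * (F1 x * I2 + F2 x * I1) \<partial>lebesgue)"
    by (simp add: nn_integral_cmult nn_integral_add I1_def I2_def)
  also have "\<dots> = ennreal \<delta> * (I1 * I2 + I2 * I1)"
    by (simp add: nn_integral_cmult nn_integral_add nn_integral_multc I1_def I2_def)
  also have "\<dots> = ennreal (2 * \<delta>) * I1 * I2"
  proof -
    have "I1 * I2 + I2 * I1 = 2 * (I1 * I2)" by (metis mult.commute mult_2)
    moreover have "ennreal (2 * \<delta>) = 2 * ennreal \<delta>" using \<open>0 \<le> \<delta>\<close> by (simp add: ennreal_mult)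
    ultimately show ?thesis by (simp add: ac_simps)
  qed
  finally have "ennreal (2 * \<delta>) * I1 * I2
      = (\<integral>\<^sup>+x. \<integral>\<^sup>+y. ennreal \<delta> * (F1 x * F2 y + F2 x * F1 y) \<partial>lebesgue \<partial>lebesgue)" ..
  also have "\<dots> \<le> (\<integral>\<^sup>+x. \<integral>\<^sup>+y. ennreal (Vminus V (norm (x - y)) * (u1 x + u2 x)\<^sup>2 * (u1 y + u2 y)\<^sup>2) \<partial>lebesgue \<partial>lebesgue)"
  proof (intro nn_integral_mono)
    fix x y :: 'a
    show "ennreal \<delta> * (F1 x * F2 y + F2 x * F1 y)
        \<le> ennreal (Vminus V (norm (x - y)) * (u1 x + u2 x)\<^sup>2 * (u1 y + u2 y)\<^sup>2)"
    proof -
      have "ennreal \<delta> * (F1 x * F2 y + F2 x * F1 y)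
          = ennreal (\<delta> * ((u1 x)\<^sup>2 * (u2 y)\<^sup>2 + (u2 x)\<^sup>2 * (u1 y)\<^sup>2))"
        using \<open>0 \<le> \<delta>\<close> by (simp add: F1_def F2_def ennreal_mult ennreal_plus)
      also have "\<dots> \<le> ennreal (Vminus V (norm (x - y)) * (u1 x + u2 x)\<^sup>2 * (u1 y + u2 y)\<^sup>2)"
        by (intro ennreal_leI Vminus_cross_terms_le[OF disj[of x] disj[of y] far])
      finally show ?thesis .
    qed
  qed
  finally show ?thesis by (simp add: I1_def I2_def F1_def[abs_def] F2_def[abs_def])
qed

lemma enn2ereal_diff_neg:
  fixes P N :: ennreal
  assumes "P \<le> ennreal A" "ennreal B \<le> N" "0 \<le> A" "A < B"
  shows "enn2ereal P - enn2ereal N < 0"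
proof -
  obtain p where p: "P = ennreal p" "0 \<le> p" "p \<le> A"
    using assms(1,3) by (cases P rule: ennreal_cases) (auto simp: top_unique)
  show ?thesis
    using assms(2,3,4) p by (cases N rule: ennreal_cases) (auto simp: ennreal_le_iff2)
qed
lemma Pfun_neg_two_lumps:
  fixes u1 u2 :: "real^2 \<Rightarrow> real"
  assumes [measurable]: "u1 \<in> borel_measurable lebesgue" "u2 \<in> borel_measurable lebesgue"
    and I1: "(\<integral>\<^sup>+x. ennreal ((u1 x)\<^sup>2) \<partial>lebesgue) = ennreal m"
    and I2: "(\<integral>\<^sup>+x. ennreal ((u2 x)\<^sup>2) \<partial>lebesgue) = ennreal m" and "m > 0"
    and disj: "\<And>x. u1 x = 0 \<or> u2 x = 0"
    and near: "\<And>x y. x \<noteq> y \<Longrightarrow> u1 x + u2 x \<noteq> 0 \<Longrightarrow> u1 y + u2 y \<noteq> 0 \<Longrightarrow> Vplus V (norm (x - y)) \<le> \<eta>"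
    and far: "\<And>x y. u1 x \<noteq> 0 \<Longrightarrow> u2 y \<noteq> 0 \<Longrightarrow> \<delta> \<le> Vminus V (norm (x - y))"
    and "0 \<le> \<eta>" "2 * \<eta> < \<delta>"
  shows "Pfun V (\<lambda>x. u1 x + u2 x) < 0"
proof -
  have "ennreal ((u1 x + u2 x)\<^sup>2) = ennreal ((u1 x)\<^sup>2) + ennreal ((u2 x)\<^sup>2)" for x
    using disj[of x] by (cases "u1 x = 0") auto
  then have "(\<integral>\<^sup>+x. ennreal ((u1 x + u2 x)\<^sup>2) \<partial>lebesgue) = ennreal m + ennreal m"
    by (simp add: nn_integral_add I1 I2)
  also have "\<dots> = ennreal (2 * m)"
    using \<open>m > 0\<close> by (simp add: ennreal_plus[symmetric])
  finally have "(\<integral>\<^sup>+x. \<integral>\<^sup>+y. ennreal (Vplus V (norm (x - y)) * (u1 x + u2 x)\<^sup>2 * (u1 y + u2 y)\<^sup>2) \<partial>lebesgue \<partial>lebesgue)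
      \<le> ennreal \<eta> * (ennreal (2 * m))\<^sup>2"
    using nn_integral_Vplus_le[of "\<lambda>x. u1 x + u2 x" \<eta> V] near \<open>0 \<le> \<eta>\<close> by simp
  also have "\<dots> = ennreal (\<eta> * (2 * m)\<^sup>2)"
    using \<open>0 \<le> \<eta>\<close> \<open>m > 0\<close> by (simp add: ennreal_power ennreal_mult)
  finally have P: "(\<integral>\<^sup>+x. \<integral>\<^sup>+y. ennreal (Vplus V (norm (x - y)) * (u1 x + u2 x)\<^sup>2 * (u1 y + u2 y)\<^sup>2) \<partial>lebesgue \<partial>lebesgue)
      \<le> ennreal (\<eta> * (2 * m)\<^sup>2)" .
  have "ennreal (2 * \<delta> * m * m) = ennreal (2 * \<delta>) * ennreal m * ennreal m"
    using \<open>0 \<le> \<eta>\<close> \<open>2 * \<eta> < \<delta>\<close> \<open>m > 0\<close> by (simp add: ennreal_mult)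
  also have "\<dots> \<le> (\<integral>\<^sup>+x. \<integral>\<^sup>+y. ennreal (Vminus V (norm (x - y)) * (u1 x + u2 x)\<^sup>2 * (u1 y + u2 y)\<^sup>2) \<partial>lebesgue \<partial>lebesgue)"
    using nn_integral_Vminus_ge[of u1 u2 \<delta> V] disj far \<open>0 \<le> \<eta>\<close> \<open>2 * \<eta> < \<delta>\<close>
    by (simp add: I1 I2)
  finally have N: "ennreal (2 * \<delta> * m * m)
      \<le> (\<integral>\<^sup>+x. \<integral>\<^sup>+y. ennreal (Vminus V (norm (x - y)) * (u1 x + u2 x)\<^sup>2 * (u1 y + u2 y)\<^sup>2) \<partial>lebesgue \<partial>lebesgue)" .
  have "\<eta> * (2 * m)\<^sup>2 = 2 * (2 * \<eta>) * (m * m)"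
    by (simp add: power2_eq_square algebra_simps)
  also have "\<dots> < 2 * \<delta> * m * m"
    using \<open>2 * \<eta> < \<delta>\<close> \<open>m > 0\<close> by simp
  finally show ?thesis
    unfolding Pfun_def using enn2ereal_diff_neg[OF P N] \<open>0 \<le> \<eta>\<close> by simp
qed

lemma Pfun_bump_pair_neg:
  fixes V :: "real \<Rightarrow> real" and q :: "real^2"
  assumes "0 < \<epsilon>" "2 * \<epsilon> \<le> norm q"
    and cross: "\<And>t. \<bar>t - norm q\<bar> < 2 * \<epsilon> \<Longrightarrow> V t \<le> - \<delta>"
    and close: "\<And>t. 0 < t \<Longrightarrow> t < 2 * \<epsilon> \<Longrightarrow> Vplus V t \<le> \<eta>"
    and "0 \<le> \<eta>" "2 * \<eta> < \<delta>"
  shows "Pfun V (\<lambda>x. bump 0 \<epsilon> x + bump q \<epsilon> x) < 0"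
proof -
  have dist: "\<bar>norm (x - y) - norm (c - c')\<bar> < 2 * \<epsilon>" if "bump c \<epsilon> x \<noteq> 0" "bump c' \<epsilon> y \<noteq> 0" for x y c c' :: "real^2"
    using bumps_distance[OF that] \<open>0 < \<epsilon>\<close> by simp
  have disj: "bump 0 \<epsilon> x = 0 \<or> bump q \<epsilon> x = 0" for x
    using dist[of 0 x q x] \<open>2 * \<epsilon> \<le> norm q\<close> by auto
  have far: "\<delta> \<le> Vminus V (norm (x - y))" if "bump 0 \<epsilon> x \<noteq> 0" "bump q \<epsilon> y \<noteq> 0" for x y
    using cross[of "norm (x - y)"] dist[OF that] by (simp add: Vminus_def)
  have near: "Vplus V (norm (x - y)) \<le> \<eta>"
    if "x \<noteq> y" and supp: "bump 0 \<epsilon> x + bump q \<epsilon> x \<noteq> 0" "bump 0 \<epsilon> y + bump q \<epsilon> y \<noteq> 0" for x y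
  proof -
    have "\<exists>c\<in>{0, q}. bump c \<epsilon> x \<noteq> 0" "\<exists>c'\<in>{0, q}. bump c' \<epsilon> y \<noteq> 0"
      using supp by auto
    then obtain c c' where c: "c \<in> {0, q}" "c' \<in> {0, q}" "bump c \<epsilon> x \<noteq> 0" "bump c' \<epsilon> y \<noteq> 0"
      by blast
    show ?thesis
    proof (cases "c = c'")
      case True
      then show ?thesis using close[of "norm (x - y)"] dist[OF c(3,4)] \<open>x \<noteq> y\<close> by simp
    next
      case False
      then have "norm (c - c') = norm q" using c(1,2) by (auto simp: norm_minus_commute)
      then have "V (norm (x - y)) \<le> - \<delta>" using cross dist[OF c(3,4)] by simp
      then show ?thesis using \<open>0 \<le> \<eta>\<close> \<open>2 * \<eta> < \<delta>\<close> by (simp add: Vplus_def)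
    qed
  qed
  obtain m where "m > 0" and m: "\<And>c::real^2. (\<integral>\<^sup>+x. ennreal ((bump c \<epsilon> x)\<^sup>2) \<partial>lebesgue) = ennreal m"
    using nn_integral_bump_square[OF \<open>0 < \<epsilon>\<close>] by blast
  have "bump c \<epsilon> \<in> borel_measurable lebesgue" for c :: "real^2"
    by (intro measurable_completion) (simp add: borel_measurable_continuous_onI continuous_on_bump)
  then show ?thesis
    using Pfun_neg_two_lumps[OF _ _ m m \<open>m > 0\<close> disj near far \<open>0 \<le> \<eta>\<close> \<open>2 * \<eta> < \<delta>\<close>] by simp
qed

lemma exists_Pfun_neg:
  fixes V :: "real \<Rightarrow> real"
  assumes cont: "continuous_on {0<..} V"
    and V3: "\<exists>I. open I \<and> I \<noteq> {} \<and> I \<subseteq> {0<..} \<and> (\<forall>t\<in>I. V t < 0)"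
    and Vplus_0: "(Vplus V \<longlongrightarrow> 0) (at_right 0)"
  shows "\<exists>u\<in>Xsp. \<not> (AE x in lebesgue. u x = 0) \<and> Pfun V u < 0"
proof -
  obtain r d \<delta> where "0 < d" "d < r" "0 < \<delta>" and neg: "\<forall>t\<in>{r-d..r+d}. V t \<le> - \<delta>"
    using V3 V_le_neg_on_interval[OF cont] by metis
  obtain b where "b > 0" and b: "\<And>t. 0 < t \<Longrightarrow> t < b \<Longrightarrow> Vplus V t < \<delta> / 4"
    using order_tendstoD(2)[OF Vplus_0, of "\<delta> / 4"] \<open>0 < \<delta>\<close> by (auto simp: eventually_at_right_field)
  define \<epsilon> where "\<epsilon> = min b d / 2"
  define q :: "real^2" where "q = r *\<^sub>R axis 1 1"
  have "norm q = r" using \<open>d < r\<close> \<open>0 < d\<close> by (simp add: q_def)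
  have "\<epsilon> > 0" using \<open>b > 0\<close> \<open>d > 0\<close> by (simp add: \<epsilon>_def)
  have "Pfun V (\<lambda>x. bump 0 \<epsilon> x + bump q \<epsilon> x) < 0"
  proof (rule Pfun_bump_pair_neg[where \<eta> = "\<delta> / 4"])
    show "2 * \<epsilon> \<le> norm q" using \<open>norm q = r\<close> \<open>d < r\<close> by (simp add: \<epsilon>_def)
    show "V t \<le> - \<delta>" if "\<bar>t - norm q\<bar> < 2 * \<epsilon>" for t
    proof -
      have "t \<in> {r-d..r+d}" using that \<open>norm q = r\<close> by (auto simp: \<epsilon>_def abs_less_iff)
      then show ?thesis using neg by blast
    qed
    show "Vplus V t \<le> \<delta> / 4" if "0 < t" "t < 2 * \<epsilon>" for t
      using b[of t] that by (simp add: \<epsilon>_def)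
  qed (use \<open>\<epsilon> > 0\<close> \<open>0 < \<delta>\<close> in auto)
  moreover have "\<not> (AE x in lebesgue. bump 0 \<epsilon> x + bump q \<epsilon> x = 0)"
    using bump_pos[of "0::real^2" 0 \<epsilon>] bump_nonneg[of q \<epsilon> 0] \<open>\<epsilon> > 0\<close>
    by (intro not_AE_eq_0_if_continuous[where x = 0]) (auto intro: continuous_intros continuous_on_bump)
  ultimately show ?thesis
    using bump_pair_in_Xsp[of \<epsilon> 0 q] \<open>\<epsilon> > 0\<close> by auto
qed

theorem lemma3p3:
  fixes V a1 a2 a3 :: "real \<Rightarrow> real"
  assumes cont: "continuous_on {0<..} V"
    and V1_a2: "Linf_pos a2"
    and V1_a1_inf: "\<exists>c>0. \<forall>t\<ge>2. a1 t \<ge> c"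
    and V1_a2_inf: "\<exists>c>0. \<forall>t>0. a2 t \<ge> c"
    and V1: "\<forall>t>0. a1 t * ln (1 + t) \<le> Vplus V t \<and> Vplus V t \<le> a2 t * ln (1 + t)"
    and V2_pos: "\<exists>S\<in>sets lebesgue. S \<subseteq> {0<..} \<and> emeasure lebesgue S > 0 \<and> (\<forall>t\<in>S. a3 t > 0)"
    and V2: "\<forall>t>0. Vminus V t \<le> a3 t / t"
    and V2_a3: "Linf_pos a3 \<or> (\<exists>lam::real. 1 \<le> lam \<and> lam < 3 \<and> (\<forall>t>0. a3 t = t powr (- lam)))"
    and V3: "\<exists>I. open I \<and> I \<noteq> {} \<and> I \<subseteq> {0<..} \<and> (\<forall>t\<in>I. V t < 0)"
  shows "filterlim (Vplus V) at_top at_top \<and> (Vplus V \<longlongrightarrow> 0) (at_right 0)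
     \<and> (Vminus V \<longlongrightarrow> 0) at_top
     \<and> filterlim V at_top at_top
     \<and> (\<exists>u0\<in>Xsp. \<not> (AE x in lebesgue. u0 x = 0) \<and> Pfun V u0 < 0)"
proof -
  have top: "filterlim (Vplus V) at_top at_top"
    using V1 by (intro Vplus_tendsto_at_top[OF V1_a1_inf]) auto
  obtain M where "\<forall>t>0. Vplus V t \<le> M * ln (1 + t)"
    using Vplus_le_ess_bound[OF cont V1_a2] V1 by auto
  then have zero: "(Vplus V \<longlongrightarrow> 0) (at_right 0)"
    by (rule Vplus_tendsto_0_at_right)
  show ?thesis
    using top zero Vminus_tendsto_0_at_top[OF top] filterlim_V_at_top[OF top]
      exists_Pfun_neg[OF cont V3 zero] by blast
qed

end
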